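(* Fix $\delta\in(0,1)$, $T\ge1$, a measurable $f:\mathbb R^{d_x}\to\mathbb R^{d_x}$, a matrix $H\in\mathbb R^{d_x\times d_x}$, and $R\ge\sqrt{d_x}+\sqrt{2\log(T/\delta)}$. Let $\{W_t\}_{t\ge0}$, $\{W'_t\}_{t\ge0}$ be i.i.d. $N(0,I_{d_x})$ sequences, $\bar W_t=W'_t\mathbf 1\{\|W'_t\|_2\le R\}$, and define $$X_{t+1}=f(X_t)+HW_t,\ X_0=HW_0;\qquad \bar X_{t+1}=f(\bar X_t)+H\bar W_t,\ \bar X_0=H\bar W_0.$$ Then for any $k\in\{1,\dots,T-1\}$, $t\in\{0,\dots,T-1-k\}$ and $x\in\mathbb R^{d_x}$, $$\|\mathsf P_{X_{t+k}}(\cdot\mid X_t=x)-\mathsf P_{\bar X_{t+k}}(\cdot\mid\bar X_t=x)\|_{\mathsf{TV}}\le\delta,$$ and for any $t\in\{0,\dots,T-1\}$, $\|\mathsf P_{X_t}-\mathsf P_{\bar X_t}\|_{\mathsf{TV}}\le\delta$.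
   Context: $\mathsf P_Z$ denotes the law of $Z$ and $\mathsf P_Z(\cdot\mid\cdot)$ conditional laws. $\|\mu-\nu\|_{\mathsf{TV}}=\sup_A|\mu(A)-\nu(A)|$. *)

theory Defs
  imports "HOL-Probability.Probability"
begin

definition std_gauss :: "(real ^ 'n::finite) measure" where
  "std_gauss = density lborel
     (\<lambda>x::real^'n. ennreal ((2 * pi) powr (- real CARD('n) / 2) * exp (- (norm x)\<^sup>2 / 2)))"

definition tv_dist :: "'a measure \<Rightarrow> 'a measure \<Rightarrow> real" where
  "tv_dist P Q = (SUP A \<in> sets P. \<bar>measure P A - measure Q A\<bar>)"

fun proc :: "(real^'n \<Rightarrow> real^'n) \<Rightarrow> real^'n^'n \<Rightarrow> (nat \<Rightarrow> real^'n) \<Rightarrow> nat \<Rightarrow> real^'n::finite" where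
  "proc f H w 0 = H *v w 0"
| "proc f H w (Suc t) = f (proc f H w t) + H *v w t"

fun run_from :: "(real^'n \<Rightarrow> real^'n) \<Rightarrow> real^'n^'n \<Rightarrow> (nat \<Rightarrow> real^'n) \<Rightarrow> real^'n \<Rightarrow> nat \<Rightarrow> nat \<Rightarrow> real^'n::finite" where
  "run_from f H w x s 0 = x"
| "run_from f H w x s (Suc j) = f (run_from f H w x s j) + H *v w (s + j)"

text \<open>Conditional law of the (t+k)-th state given the t-th state equals x, taken as the
  Markov transition kernel of the recursion (the version for which "for every x" is meaningful).\<close>
definition cond_law :: "'a measure \<Rightarrow> (real^'n \<Rightarrow> real^'n) \<Rightarrow> real^'n^'n \<Rightarrow> (nat \<Rightarrow> 'a \<Rightarrow> real^'n)
    \<Rightarrow> nat \<Rightarrow> nat \<Rightarrow> real^'n \<Rightarrow> (real^'n::finite) measure" where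
  "cond_law M f H W t k x = distr M borel (\<lambda>\<omega>. run_from f H (\<lambda>j. W j \<omega>) x t k)"

definition law :: "'a measure \<Rightarrow> (real^'n \<Rightarrow> real^'n) \<Rightarrow> real^'n^'n \<Rightarrow> (nat \<Rightarrow> 'a \<Rightarrow> real^'n)
    \<Rightarrow> nat \<Rightarrow> (real^'n::finite) measure" where
  "law M f H W t = distr M borel (\<lambda>\<omega>. proc f H (\<lambda>j. W j \<omega>) t)"

end

theory Submission
  imports Defs
begin

(* Being i.i.d. standard Gaussian, the sequences W and W' give the same joint law to any finite
  block of noise terms, so a state built from at most T of them has the same law whether it is
  driven by W or by W'. Driving it by W' and by the truncation Wbar couples the two states so
  that they can differ only if some norm W'_j exceeds R; hence their total variation distance
  is at most the sum of those tail probabilities. A Chernoff bound for the chi-square variable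
  (norm W'_j)^2 shows that each tail probability is at most delta / T for the stated R. *)

lemma nn_integral_exp_scaled_square:
  fixes s :: real
  assumes "0 < s"
  shows "(\<integral>\<^sup>+y. ennreal (exp (- (s * y\<^sup>2) / 2)) \<partial>lborel) = ennreal (sqrt (2 * pi / s))"
proof -
  define \<sigma> where "\<sigma> = 1 / sqrt s"
  have "\<sigma> > 0" and \<sigma>_square: "\<sigma>\<^sup>2 = 1 / s"
    using assms by (simp_all add: \<sigma>_def power_divide)
  have density: "exp (- (s * y\<^sup>2) / 2) = sqrt (2 * pi / s) * normal_density 0 \<sigma> y" for y
    using assms by (simp add: normal_density_def \<sigma>_square field_simps real_sqrt_divide)
  have "(\<integral>\<^sup>+y. ennreal (exp (- (s * y\<^sup>2) / 2)) \<partial>lborel)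
      = (\<integral>\<^sup>+y. ennreal (sqrt (2 * pi / s)) * ennreal (normal_density 0 \<sigma> y) \<partial>lborel)"
    using assms by (intro nn_integral_cong, subst density) (simp add: ennreal_mult)
  also have "\<dots> = ennreal (sqrt (2 * pi / s)) * (\<integral>\<^sup>+y. ennreal (normal_density 0 \<sigma> y) \<partial>lborel)"
    by (rule nn_integral_cmult) simp
  also have "(\<integral>\<^sup>+y. ennreal (normal_density 0 \<sigma> y) \<partial>lborel) = 1"
    using \<open>\<sigma> > 0\<close> by (subst nn_integral_eq_integral) auto
  finally show ?thesis by simp
qed

lemma nn_integral_exp_scaled_norm_square:
  fixes s :: real
  assumes "0 < s"
  shows "(\<integral>\<^sup>+x. ennreal (exp (- (s * (norm (x :: 'a :: euclidean_space))\<^sup>2) / 2)) \<partial>lborel)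
       = ennreal ((2 * pi / s) powr (real DIM('a) / 2))"
proof -
  have product_form: "exp (- (s * (norm x)\<^sup>2) / 2) = (\<Prod>b\<in>Basis. exp (- (s * (x \<bullet> b)\<^sup>2) / 2))" for x :: 'a
  proof -
    have "(norm x)\<^sup>2 = (\<Sum>b\<in>Basis. (x \<bullet> b)\<^sup>2)"
      unfolding power2_norm_eq_inner using euclidean_inner[of x x] by (simp only: power2_eq_square)
    then have "- (s * (norm x)\<^sup>2) / 2 = (\<Sum>b\<in>Basis. - (s * (x \<bullet> b)\<^sup>2) / 2)"
      by (simp add: sum_divide_distrib[symmetric] sum_distrib_left sum_negf)
    then show ?thesis
      by (simp add: exp_sum[symmetric])
  qed
  have "(\<integral>\<^sup>+x. ennreal (exp (- (s * (norm (x :: 'a))\<^sup>2) / 2)) \<partial>lborel)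
      = (\<integral>\<^sup>+x. (\<Prod>b\<in>Basis. ennreal (exp (- (s * ((x :: 'a) \<bullet> b)\<^sup>2) / 2))) \<partial>lborel)"
    by (intro nn_integral_cong) (simp only: product_form, simp add: prod_ennreal)
  also have "\<dots> = (\<Prod>b\<in>(Basis :: 'a set). \<integral>\<^sup>+y. ennreal (exp (- (s * y\<^sup>2) / 2)) \<partial>lborel)"
    by (rule nn_integral_lborel_prod) auto
  also have "\<dots> = ennreal (sqrt (2 * pi / s) ^ DIM('a))"
    using assms nn_integral_exp_scaled_square[OF assms] by (simp add: ennreal_power)
  also have "sqrt (2 * pi / s) ^ DIM('a) = (2 * pi / s) powr (real DIM('a) / 2)"
    using assms by (simp add: sqrt_def root_powr_inverse powr_realpow[symmetric] powr_powr)
  finally show ?thesis .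
qed

lemma std_gauss_norm_tail_chernoff:
  fixes \<theta> R :: real
  assumes "0 \<le> \<theta>" "\<theta> < 1 / 2" "0 \<le> R"
  shows "emeasure (std_gauss :: (real ^ 'n::finite) measure) {x. R < norm x}
       \<le> ennreal (exp (- \<theta> * R\<^sup>2) * (1 - 2 * \<theta>) powr (- real CARD('n) / 2))"
proof -
  define s where "s = 1 - 2 * \<theta>"
  define c where "c = (2 * pi) powr (- real CARD('n) / 2)"
  have "0 < s" using assms by (simp add: s_def)
  have "emeasure (std_gauss :: (real ^ 'n) measure) {x. R < norm x}
      = (\<integral>\<^sup>+x. ennreal (c * exp (- (norm (x :: real ^ 'n))\<^sup>2 / 2)) * indicator {x. R < norm x} x \<partial>lborel)"
    unfolding std_gauss_def c_def by (subst emeasure_density) auto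
  also have "\<dots> \<le> (\<integral>\<^sup>+x. ennreal (c * exp (- \<theta> * R\<^sup>2))
                      * ennreal (exp (- (s * (norm (x :: real ^ 'n))\<^sup>2) / 2)) \<partial>lborel)"
  proof (intro nn_integral_mono)
    fix x :: "real ^ 'n"
    have "exp (- (norm x)\<^sup>2 / 2) \<le> exp (- \<theta> * R\<^sup>2) * exp (- (s * (norm x)\<^sup>2) / 2)"
      if "R < norm x"
    proof -
      have "R\<^sup>2 \<le> (norm x)\<^sup>2" using that assms by (intro power_mono) auto
      then have "- (norm x)\<^sup>2 / 2 \<le> - \<theta> * R\<^sup>2 + - (s * (norm x)\<^sup>2) / 2"
        using assms by (simp add: s_def algebra_simps mult_left_mono)
      then show ?thesis by (simp add: exp_add[symmetric])
    qed
    then show "ennreal (c * exp (- (norm x)\<^sup>2 / 2)) * indicator {x. R < norm x} x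
        \<le> ennreal (c * exp (- \<theta> * R\<^sup>2)) * ennreal (exp (- (s * (norm x)\<^sup>2) / 2))"
      by (auto simp: c_def ennreal_mult[symmetric] mult.assoc intro!: ennreal_leI mult_left_mono
          split: split_indicator)
  qed
  also have "\<dots> = ennreal (c * exp (- \<theta> * R\<^sup>2)) * ennreal ((2 * pi / s) powr (real CARD('n) / 2))"
    using nn_integral_exp_scaled_norm_square[OF \<open>0 < s\<close>, where 'a="real ^ 'n"]
    by (subst nn_integral_cmult) auto
  also have "\<dots> = ennreal (exp (- \<theta> * R\<^sup>2) * s powr (- real CARD('n) / 2))"
  proof -
    have "c * (2 * pi / s) powr (real CARD('n) / 2) = s powr (- real CARD('n) / 2)"
      using \<open>0 < s\<close> by (simp add: c_def powr_divide powr_minus divide_simps)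
    then show ?thesis
      by (simp add: c_def ennreal_mult[symmetric] mult_ac)
  qed
  finally show ?thesis by (simp add: s_def)
qed

(* The witness is \<theta> = b / (2 (a + b)) with a = sqrt d, b = sqrt (2 L): then 1 - 2 \<theta> = a / (a + b),
  so the moment factor is at most exp (a b / 2), while \<theta> (a + b)^2 = a b / 2 + L. *)
lemma chi_square_chernoff_exponent_le:
  fixes d L R :: real
  assumes "1 \<le> d" "0 < L" "sqrt d + sqrt (2 * L) \<le> R"
  shows "\<exists>\<theta>\<in>{0..<1 / 2}. exp (- \<theta> * R\<^sup>2) * (1 - 2 * \<theta>) powr (- d / 2) \<le> exp (- L)"
proof
  define a where "a = sqrt d"
  define b where "b = sqrt (2 * L)"
  define \<theta> where "\<theta> = b / (2 * (a + b))"
  have "1 \<le> a" "0 < b" "a + b \<le> R" and a_square: "a\<^sup>2 = d" and b_square: "b\<^sup>2 = 2 * L"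
    using assms by (simp_all add: a_def b_def)
  then show "\<theta> \<in> {0..<1 / 2}"
    by (simp add: \<theta>_def field_simps)
  have "ln (1 - 2 * \<theta>) = - ln (1 + b / a)"
  proof -
    have "1 - 2 * \<theta> = a / (a + b)" "1 + b / a = (a + b) / a"
      using \<open>1 \<le> a\<close> \<open>0 < b\<close> by (simp_all add: \<theta>_def field_simps)
    then show ?thesis using \<open>1 \<le> a\<close> \<open>0 < b\<close> by (simp add: ln_div)
  qed
  moreover have "0 < 1 - 2 * \<theta>"
    using \<open>1 \<le> a\<close> \<open>0 < b\<close> by (simp add: \<theta>_def field_simps)
  ultimately have "(1 - 2 * \<theta>) powr (- d / 2) = exp (d / 2 * ln (1 + b / a))"
    by (simp add: powr_def)
  also have "\<dots> \<le> exp (d / 2 * (b / a))"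
    using assms(1) \<open>1 \<le> a\<close> \<open>0 < b\<close> by (intro exp_mono mult_left_mono ln_add_one_self_le_self) auto
  also have "d / 2 * (b / a) = a * b / 2"
    using \<open>1 \<le> a\<close> by (simp add: a_square[symmetric] power2_eq_square)
  finally have moment_factor: "(1 - 2 * \<theta>) powr (- d / 2) \<le> exp (a * b / 2)" .
  have "a * b / 2 + L = \<theta> * (a + b)\<^sup>2"
    using \<open>1 \<le> a\<close> \<open>0 < b\<close> b_square by (simp add: \<theta>_def power2_eq_square field_simps)
  also have "\<dots> \<le> \<theta> * R\<^sup>2"
    using \<open>a + b \<le> R\<close> \<open>1 \<le> a\<close> \<open>0 < b\<close> by (intro mult_left_mono power_mono) (simp_all add: \<theta>_def)
  finally have exponent: "a * b / 2 - \<theta> * R\<^sup>2 \<le> - L" by simp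
  have "exp (- \<theta> * R\<^sup>2) * (1 - 2 * \<theta>) powr (- d / 2) \<le> exp (- \<theta> * R\<^sup>2) * exp (a * b / 2)"
    using moment_factor by simp
  also have "\<dots> \<le> exp (- L)"
    using exponent by (simp add: exp_add[symmetric])
  finally show "exp (- \<theta> * R\<^sup>2) * (1 - 2 * \<theta>) powr (- d / 2) \<le> exp (- L)" .
qed

lemma std_gauss_norm_tail_le:
  fixes \<epsilon> R :: real
  assumes "0 < \<epsilon>" "\<epsilon> < 1" "sqrt (real CARD('n)) + sqrt (2 * ln (1 / \<epsilon>)) \<le> R"
  shows "measure (std_gauss :: (real ^ 'n::finite) measure) {x. R < norm x} \<le> \<epsilon>"
proof -
  have "0 < ln (1 / \<epsilon>)" "exp (- ln (1 / \<epsilon>)) = \<epsilon>"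
    using assms by (simp_all add: ln_div)
  then obtain \<theta> where "0 \<le> \<theta>" "\<theta> < 1 / 2"
    and "exp (- \<theta> * R\<^sup>2) * (1 - 2 * \<theta>) powr (- real CARD('n) / 2) \<le> \<epsilon>"
    using chi_square_chernoff_exponent_le[of "real CARD('n)" "ln (1 / \<epsilon>)" R] assms(3) by auto
  moreover have "0 \<le> R"
    using assms(3) real_sqrt_ge_zero[of "real CARD('n)"] real_sqrt_ge_zero[of "2 * ln (1 / \<epsilon>)"]
      \<open>0 < ln (1 / \<epsilon>)\<close> by linarith
  ultimately have "emeasure (std_gauss :: (real ^ 'n) measure) {x. R < norm x} \<le> ennreal \<epsilon>"
    by (intro order_trans[OF std_gauss_norm_tail_chernoff] ennreal_leI)
  then show ?thesis
    using assms by (simp add: measure_def enn2real_leI)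
qed

lemma tv_dist_distr_le_measure_disagree:
  assumes "finite_measure M" "X \<in> measurable M N" "Y \<in> measurable M N" "B \<in> sets M"
    and "\<And>\<omega>. \<omega> \<in> space M - B \<Longrightarrow> X \<omega> = Y \<omega>"
  shows "tv_dist (distr M N X) (distr M N Y) \<le> measure M B"
proof -
  interpret finite_measure M by fact
  have one_sided: "measure M (X' -` A \<inter> space M) \<le> measure M (Y' -` A \<inter> space M) + measure M B"
    if "A \<in> sets N" "X' \<in> measurable M N" "Y' \<in> measurable M N"
      "\<And>\<omega>. \<omega> \<in> space M - B \<Longrightarrow> X' \<omega> = Y' \<omega>" for A X' Y'
  proof -
    have "measure M (X' -` A \<inter> space M) \<le> measure M ((Y' -` A \<inter> space M) \<union> B)"
      using that \<open>B \<in> sets M\<close> by (intro finite_measure_mono) (auto simp: measurable_sets)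
    also have "\<dots> \<le> measure M (Y' -` A \<inter> space M) + measure M B"
      using that \<open>B \<in> sets M\<close> by (intro measure_Un_le) (auto simp: measurable_sets)
    finally show ?thesis .
  qed
  show ?thesis
    unfolding tv_dist_def
  proof (rule cSUP_least)
    fix A assume "A \<in> sets (distr M N X)"
    then have "A \<in> sets N" by simp
    with one_sided[of A X Y] one_sided[of A Y X] assms
    show "\<bar>measure (distr M N X) A - measure (distr M N Y) A\<bar> \<le> measure M B"
      by (simp add: measure_distr abs_le_iff)
  qed (use sets.top[of N] in blast)
qed

lemma (in prob_space) distr_restrict_iid_eq_PiM:
  assumes "indep_vars (\<lambda>_. N) V I" "\<And>i. i \<in> I \<Longrightarrow> random_variable N (V i)"
    and "\<And>i. i \<in> I \<Longrightarrow> distr M N (V i) = \<mu>"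
    and "inj_on e J" "e ` J \<subseteq> I" "J \<noteq> {}"
  shows "distr M (\<Pi>\<^sub>M j\<in>J. N) (\<lambda>\<omega>. \<lambda>j\<in>J. V (e j) \<omega>) = (\<Pi>\<^sub>M j\<in>J. \<mu>)"
proof -
  let ?K = "e ` J"
  obtain j where "e j \<in> I" using assms(5,6) by blast
  have "prob_space \<mu>"
    using prob_space_distr[OF assms(2)[OF \<open>e j \<in> I\<close>]] assms(3)[OF \<open>e j \<in> I\<close>] by simp
  have "sets \<mu> = sets N"
    using sets_distr[of M N "V (e j)"] assms(3)[OF \<open>e j \<in> I\<close>] by simp
  have "indep_vars (\<lambda>_. N) V ?K"
    using assms(1,5) by (rule indep_vars_subset)
  then have "distr M (\<Pi>\<^sub>M i\<in>?K. N) (\<lambda>\<omega>. \<lambda>i\<in>?K. V i \<omega>) = (\<Pi>\<^sub>M i\<in>?K. distr M N (V i))"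
    using assms(2,5,6) by (subst (asm) indep_vars_iff_distr_eq_PiM') auto
  also have "\<dots> = (\<Pi>\<^sub>M i\<in>?K. \<mu>)"
    using assms(3,5) by (intro PiM_cong) auto
  finally have joint: "distr M (\<Pi>\<^sub>M i\<in>?K. N) (\<lambda>\<omega>. \<lambda>i\<in>?K. V i \<omega>) = (\<Pi>\<^sub>M i\<in>?K. \<mu>)" .
  have reindex: "(\<lambda>u. \<lambda>j\<in>J. u (e j)) \<in> measurable (\<Pi>\<^sub>M i\<in>?K. N) (\<Pi>\<^sub>M j\<in>J. N)"
    by (auto intro!: measurable_restrict measurable_component_singleton)
  have "(\<lambda>\<omega>. \<lambda>i\<in>?K. V i \<omega>) \<in> measurable M (\<Pi>\<^sub>M i\<in>?K. N)"
    using assms(2,5) by (intro measurable_restrict) auto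
  moreover have "(\<lambda>\<omega>. \<lambda>j\<in>J. V (e j) \<omega>) = (\<lambda>u. \<lambda>j\<in>J. u (e j)) \<circ> (\<lambda>\<omega>. \<lambda>i\<in>?K. V i \<omega>)"
    by (auto simp: fun_eq_iff)
  ultimately have "distr M (\<Pi>\<^sub>M j\<in>J. N) (\<lambda>\<omega>. \<lambda>j\<in>J. V (e j) \<omega>)
      = distr (distr M (\<Pi>\<^sub>M i\<in>?K. N) (\<lambda>\<omega>. \<lambda>i\<in>?K. V i \<omega>)) (\<Pi>\<^sub>M j\<in>J. N) (\<lambda>u. \<lambda>j\<in>J. u (e j))"
    using reindex by (simp add: distr_distr)
  also have "\<dots> = distr (\<Pi>\<^sub>M i\<in>?K. \<mu>) (\<Pi>\<^sub>M j\<in>J. \<mu>) (\<lambda>u. \<lambda>j\<in>J. u (e j))"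
    unfolding joint using \<open>sets \<mu> = sets N\<close> by (intro distr_cong sets_PiM_cong) auto
  also have "\<dots> = (\<Pi>\<^sub>M j\<in>J. \<mu>)"
    using distr_PiM_reindex[of ?K "\<lambda>_. \<mu>" e J] \<open>prob_space \<mu>\<close> \<open>inj_on e J\<close> by auto
  finally show ?thesis .
qed

lemma (in prob_space) indep_vars_sum_distr_restrict_eq:
  assumes "indep_vars (\<lambda>_. N) (\<lambda>i. case i of Inl n \<Rightarrow> X n | Inr n \<Rightarrow> Y n) UNIV"
    and "\<And>n. random_variable N (X n)" "\<And>n. random_variable N (Y n)"
    and "\<And>n. distr M N (X n) = \<mu>" "\<And>n. distr M N (Y n) = \<mu>" "J \<noteq> {}"
  shows "distr M (\<Pi>\<^sub>M j\<in>J. N) (\<lambda>\<omega>. \<lambda>j\<in>J. X j \<omega>) = distr M (\<Pi>\<^sub>M j\<in>J. N) (\<lambda>\<omega>. \<lambda>j\<in>J. Y j \<omega>)"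
  using distr_restrict_iid_eq_PiM[OF assms(1), of \<mu> Inl J] distr_restrict_iid_eq_PiM[OF assms(1), of \<mu> Inr J]
    assms(2-6) by (simp split: sum.split)

lemma comp_restrict_eq:
  assumes "\<And>w. G (restrict w J) = G w"
  shows "(\<lambda>\<omega>. G (\<lambda>j. Z j \<omega>)) = G \<circ> (\<lambda>\<omega>. \<lambda>j\<in>J. Z j \<omega>)"
  by (simp add: comp_def assms)

lemma measurable_comp_restrict:
  assumes "G \<in> measurable (\<Pi>\<^sub>M j\<in>J. N) K" "\<And>w. G (restrict w J) = G w"
    and "\<And>j. j \<in> J \<Longrightarrow> Z j \<in> measurable M N"
  shows "(\<lambda>\<omega>. G (\<lambda>j. Z j \<omega>)) \<in> measurable M K"
proof -
  have "(\<lambda>\<omega>. \<lambda>j\<in>J. Z j \<omega>) \<in> measurable M (\<Pi>\<^sub>M j\<in>J. N)"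
    using assms(3) by (rule measurable_restrict)
  then show ?thesis
    unfolding comp_restrict_eq[where G=G and J=J and Z=Z, OF assms(2)] using assms(1) by (rule measurable_comp)
qed

lemma distr_comp_restrict:
  assumes "G \<in> measurable (\<Pi>\<^sub>M j\<in>J. N) K" "\<And>w. G (restrict w J) = G w"
    and "\<And>j. j \<in> J \<Longrightarrow> Z j \<in> measurable M N"
  shows "distr M K (\<lambda>\<omega>. G (\<lambda>j. Z j \<omega>)) = distr (distr M (\<Pi>\<^sub>M j\<in>J. N) (\<lambda>\<omega>. \<lambda>j\<in>J. Z j \<omega>)) K G"
proof -
  have "(\<lambda>\<omega>. \<lambda>j\<in>J. Z j \<omega>) \<in> measurable M (\<Pi>\<^sub>M j\<in>J. N)"
    using assms(3) by (rule measurable_restrict)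
  then show ?thesis
    unfolding comp_restrict_eq[where G=G and J=J and Z=Z, OF assms(2)] by (rule distr_distr[symmetric, OF assms(1)])
qed

lemma tv_dist_perturbed_noise_le:
  fixes W W' Z :: "'i \<Rightarrow> 'a \<Rightarrow> 'b" and G :: "('i \<Rightarrow> 'b) \<Rightarrow> 'c"
  assumes "finite_measure M" "finite J"
    and "\<And>j. j \<in> J \<Longrightarrow> W j \<in> measurable M N" "\<And>j. j \<in> J \<Longrightarrow> W' j \<in> measurable M N"
    and "\<And>j. j \<in> J \<Longrightarrow> Z j \<in> measurable M N"
    and same_law: "distr M (\<Pi>\<^sub>M j\<in>J. N) (\<lambda>\<omega>. \<lambda>j\<in>J. W j \<omega>) = distr M (\<Pi>\<^sub>M j\<in>J. N) (\<lambda>\<omega>. \<lambda>j\<in>J. W' j \<omega>)"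
    and G: "G \<in> measurable (\<Pi>\<^sub>M j\<in>J. N) K" "\<And>w. G (restrict w J) = G w"
    and B: "\<And>j. j \<in> J \<Longrightarrow> B j \<in> sets M"
    and Z_eq: "\<And>j \<omega>. j \<in> J \<Longrightarrow> \<omega> \<in> space M - B j \<Longrightarrow> Z j \<omega> = W' j \<omega>"
  shows "tv_dist (distr M K (\<lambda>\<omega>. G (\<lambda>j. W j \<omega>))) (distr M K (\<lambda>\<omega>. G (\<lambda>j. Z j \<omega>)))
       \<le> (\<Sum>j\<in>J. measure M (B j))"
proof -
  interpret finite_measure M by fact
  have "distr M K (\<lambda>\<omega>. G (\<lambda>j. W j \<omega>)) = distr M K (\<lambda>\<omega>. G (\<lambda>j. W' j \<omega>))"
    using distr_comp_restrict[OF G assms(3)] distr_comp_restrict[OF G assms(4)] same_law by simp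
  moreover have "tv_dist (distr M K (\<lambda>\<omega>. G (\<lambda>j. W' j \<omega>))) (distr M K (\<lambda>\<omega>. G (\<lambda>j. Z j \<omega>)))
      \<le> measure M (\<Union>j\<in>J. B j)"
  proof (rule tv_dist_distr_le_measure_disagree)
    fix \<omega> assume "\<omega> \<in> space M - (\<Union>j\<in>J. B j)"
    then have "restrict (\<lambda>j. W' j \<omega>) J = restrict (\<lambda>j. Z j \<omega>) J"
      using Z_eq by (intro restrict_ext) auto
    then show "G (\<lambda>j. W' j \<omega>) = G (\<lambda>j. Z j \<omega>)"
      using G(2) by metis
  next
    show "(\<lambda>\<omega>. G (\<lambda>j. W' j \<omega>)) \<in> measurable M K"
      using assms(4) by (rule measurable_comp_restrict[OF G])
    show "(\<lambda>\<omega>. G (\<lambda>j. Z j \<omega>)) \<in> measurable M K"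
      using assms(5) by (rule measurable_comp_restrict[OF G])
    show "(\<Union>j\<in>J. B j) \<in> sets M"
      using \<open>finite J\<close> B by (intro sets.finite_UN)
  qed (rule finite_measure_axioms)
  moreover have "measure M (\<Union>j\<in>J. B j) \<le> (\<Sum>j\<in>J. measure M (B j))"
    using \<open>finite J\<close> B by (intro finite_measure_subadditive_finite) auto
  ultimately show ?thesis by simp
qed

lemma tv_dist_truncated_noise_le:
  fixes W W' :: "'i \<Rightarrow> 'a \<Rightarrow> 'b::real_normed_vector" and G :: "('i \<Rightarrow> 'b) \<Rightarrow> 'c"
  assumes "finite_measure M" "finite J"
    and "\<And>j. W j \<in> borel_measurable M" "\<And>j. W' j \<in> borel_measurable M"
    and "\<And>j. j \<in> J \<Longrightarrow> distr M borel (W' j) = \<mu>"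
    and "distr M (\<Pi>\<^sub>M j\<in>J. borel) (\<lambda>\<omega>. \<lambda>j\<in>J. W j \<omega>) = distr M (\<Pi>\<^sub>M j\<in>J. borel) (\<lambda>\<omega>. \<lambda>j\<in>J. W' j \<omega>)"
    and "G \<in> measurable (\<Pi>\<^sub>M j\<in>J. borel) K" "\<And>w. G (restrict w J) = G w"
  shows "tv_dist (distr M K (\<lambda>\<omega>. G (\<lambda>j. W j \<omega>)))
           (distr M K (\<lambda>\<omega>. G (\<lambda>j. if norm (W' j \<omega>) \<le> R then W' j \<omega> else 0)))
       \<le> card J * measure \<mu> {x. R < norm x}"
proof -
  have [measurable]: "W' j \<in> borel_measurable M" for j by fact
  let ?B = "\<lambda>j. {\<omega> \<in> space M. R < norm (W' j \<omega>)}"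
  have "measure M (?B j) = measure \<mu> {x. R < norm x}" if "j \<in> J" for j
    using measure_distr[OF assms(4), of "{x. R < norm x}" j] assms(5)[OF that]
    by (simp add: vimage_def Int_def conj_commute)
  then have "(\<Sum>j\<in>J. measure M (?B j)) = card J * measure \<mu> {x. R < norm x}"
    by simp
  moreover have "tv_dist (distr M K (\<lambda>\<omega>. G (\<lambda>j. W j \<omega>)))
      (distr M K (\<lambda>\<omega>. G (\<lambda>j. if norm (W' j \<omega>) \<le> R then W' j \<omega> else 0)))
    \<le> (\<Sum>j\<in>J. measure M (?B j))"
  proof (rule tv_dist_perturbed_noise_le[where N=borel and W'=W' and B="?B"])
    show "(\<lambda>\<omega>. if norm (W' j \<omega>) \<le> R then W' j \<omega> else 0) \<in> borel_measurable M" for j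
      by measurable
  qed (use assms in \<open>auto simp: restrict_def\<close>)
  ultimately show ?thesis by simp
qed

lemma borel_measurable_matrix_vector_mult [measurable]:
  "(\<lambda>v. (A :: real ^ 'n::finite ^ 'm::finite) *v v) \<in> borel_measurable borel"
  by (intro borel_measurable_continuous_onI linear_continuous_on matrix_vector_mul_bounded_linear)

lemma proc_cong: "(\<And>j. j \<le> t \<Longrightarrow> w j = w' j) \<Longrightarrow> proc f H w t = proc f H w' t"
  by (induction t) auto

lemma run_from_cong:
  "(\<And>j. j < k \<Longrightarrow> w (s + j) = w' (s + j)) \<Longrightarrow> run_from f H w x s k = run_from f H w' x s k"
  by (induction k) auto

lemma measurable_proc:
  fixes Z :: "'a \<Rightarrow> nat \<Rightarrow> real ^ 'n::finite"
  assumes [measurable]: "f \<in> borel_measurable borel"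
    and "\<And>j. j \<le> t \<Longrightarrow> (\<lambda>\<omega>. Z \<omega> j) \<in> borel_measurable N"
  shows "(\<lambda>\<omega>. proc f H (Z \<omega>) t) \<in> borel_measurable N"
  using assms(2)
proof (induction t)
  case (Suc t)
  have [measurable]: "(\<lambda>\<omega>. proc f H (Z \<omega>) t) \<in> borel_measurable N" "(\<lambda>\<omega>. Z \<omega> t) \<in> borel_measurable N"
    using Suc by auto
  show ?case by simp
qed simp

lemma measurable_run_from:
  fixes Z :: "'a \<Rightarrow> nat \<Rightarrow> real ^ 'n::finite"
  assumes [measurable]: "f \<in> borel_measurable borel"
    and "\<And>j. j < k \<Longrightarrow> (\<lambda>\<omega>. Z \<omega> (s + j)) \<in> borel_measurable N"
  shows "(\<lambda>\<omega>. run_from f H (Z \<omega>) x s k) \<in> borel_measurable N"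
  using assms(2)
proof (induction k)
  case (Suc k)
  have [measurable]: "(\<lambda>\<omega>. run_from f H (Z \<omega>) x s k) \<in> borel_measurable N"
    "(\<lambda>\<omega>. Z \<omega> (s + k)) \<in> borel_measurable N"
    using Suc by auto
  show ?case by simp
qed simp

theorem proposition11:
  fixes M :: "'a measure"
    and W W' :: "nat \<Rightarrow> 'a \<Rightarrow> real ^ 'n::finite"
    and f :: "real ^ 'n \<Rightarrow> real ^ 'n"
    and H :: "real ^ 'n ^ 'n"
    and \<delta> R :: real and T :: nat
  assumes "prob_space M"
    and "0 < \<delta>" "\<delta> < 1" "1 \<le> T"
    and "f \<in> borel_measurable borel"
    and "R \<ge> sqrt (real CARD('n)) + sqrt (2 * ln (real T / \<delta>))"
    and "\<And>n. W n \<in> borel_measurable M" "\<And>n. W' n \<in> borel_measurable M"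
    and "prob_space.indep_vars M (\<lambda>_. borel)
           (\<lambda>i. case i of Inl n \<Rightarrow> W n | Inr n \<Rightarrow> W' n) (UNIV :: (nat + nat) set)"
    and "\<And>n. distr M borel (W n) = std_gauss" "\<And>n. distr M borel (W' n) = std_gauss"
  defines "Wbar \<equiv> (\<lambda>n \<omega>. if norm (W' n \<omega>) \<le> R then W' n \<omega> else 0)"
  shows "(\<forall>k t x. 1 \<le> k \<and> t + k \<le> T - 1 \<longrightarrow>
            tv_dist (cond_law M f H W t k x) (cond_law M f H Wbar t k x) \<le> \<delta>)
       \<and> (\<forall>t. t \<le> T - 1 \<longrightarrow> tv_dist (law M f H W t) (law M f H Wbar t) \<le> \<delta>)"
proof -
  interpret prob_space M by fact
  have tail: "measure (std_gauss :: (real ^ 'n) measure) {x. R < norm x} \<le> \<delta> / T"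
    using assms(2-4,6) by (intro std_gauss_norm_tail_le) auto
  have key: "tv_dist (distr M borel (\<lambda>\<omega>. G (\<lambda>j. W j \<omega>))) (distr M borel (\<lambda>\<omega>. G (\<lambda>j. Wbar j \<omega>))) \<le> \<delta>"
    if "finite J" "J \<noteq> {}" "card J \<le> T" "G \<in> borel_measurable (\<Pi>\<^sub>M j\<in>J. borel)"
      "\<And>w. G (restrict w J) = G w" for J G
  proof -
    note same_law = indep_vars_sum_distr_restrict_eq[OF assms(9,7,8,10,11) \<open>J \<noteq> {}\<close>]
    from tv_dist_truncated_noise_le[OF finite_measure_axioms \<open>finite J\<close> assms(7,8,11) same_law that(4,5),
        where R=R]
    have "tv_dist (distr M borel (\<lambda>\<omega>. G (\<lambda>j. W j \<omega>))) (distr M borel (\<lambda>\<omega>. G (\<lambda>j. Wbar j \<omega>)))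
        \<le> card J * measure (std_gauss :: (real ^ 'n) measure) {x. R < norm x}"
      unfolding Wbar_def .
    also have "\<dots> \<le> T * (\<delta> / T)"
      using tail that by (intro mult_mono) auto
    finally show ?thesis using assms(4) by simp
  qed
  show ?thesis
    unfolding cond_law_def law_def
  proof (intro conjI allI impI)
    fix k t x assume "1 \<le> k \<and> t + k \<le> T - 1"
    then show "tv_dist (distr M borel (\<lambda>\<omega>. run_from f H (\<lambda>j. W j \<omega>) x t k))
        (distr M borel (\<lambda>\<omega>. run_from f H (\<lambda>j. Wbar j \<omega>) x t k)) \<le> \<delta>"
      using assms(5) by (intro key[of "{t..<t + k}"] measurable_run_from run_from_cong) auto
  next
    fix t assume "t \<le> T - 1"
    then show "tv_dist (distr M borel (\<lambda>\<omega>. proc f H (\<lambda>j. W j \<omega>) t))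
        (distr M borel (\<lambda>\<omega>. proc f H (\<lambda>j. Wbar j \<omega>) t)) \<le> \<delta>"
      using assms(4,5) by (intro key[of "{..t}"] measurable_proc proc_cong) auto
  qed
qed

end
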